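(* Let $\{\alpha_k\}_{k=0}^n$ be arbitrary nonzero real numbers with $n\ge1$. Then there exist $b>0$, $\zeta\in\mathbb{R}$, and a $\sigma\in\Sigma_{1,b}$ such that $(\zeta,\{(\alpha_k,1,k)\}_{k=0}^n)$ is an affine symmetry of $\sigma$.
   Context: For $a,b>0$, $\Sigma_{a,b}$ is the class of meromorphic functions on $\mathbb{C}$ of the form $\sigma(z)=C+\sum_{k\in\mathbb{Z}}c_k[\mathrm{sgn}(k)+\tanh(\pi b^{-1}(z-ka))]$ with $C\in\mathbb{C}$, $\{c_k\}\subset\mathbb{C}$, $\sup_k|c_k|e^{-\pi a'|k|/b}<\infty$ for some $a'\in(0,a)$, at least one $c_k\ne0$, and $\mathrm{sgn}(0)=0$. An affine symmetry of $\sigma$ (viewed as a function on $\mathbb{R}$) is $(\zeta,\{(\alpha_s,\beta_s,\gamma_s)\}_{s\in\mathcal{I}})$ with $\mathcal{I}$ nonempty finite, real entries, such that $\sum_s\alpha_s\sigma(\beta_st+\gamma_s)=\zeta$ for all $t\in\mathbb{R}$, and there is no proper subset $\mathcal{I}'\subsetneq\mathcal{I}$ for which $\{\sigma(\beta_s\cdot+\gamma_s):s\in\mathcal{I}'\}\cup\{\mathbf1\}$ is linearly dependent as functions $\mathbb{R}\to\mathbb{C}$. *)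

theory Defs
  imports "HOL-Analysis.Analysis"
begin

text \<open>The sum over Z is an (absolutely convergent) infinite sum.\<close>
definition Sigma_class :: "real \<Rightarrow> real \<Rightarrow> (complex \<Rightarrow> complex) \<Rightarrow> bool" where
  "Sigma_class a b \<sigma> \<longleftrightarrow>
     (\<exists>(C::complex) (c::int \<Rightarrow> complex).
        (\<exists>a'. 0 < a' \<and> a' < a \<and>
              (\<exists>M. \<forall>k. norm (c k) * exp (- pi * a' * \<bar>real_of_int k\<bar> / b) \<le> M)) \<and>
        (\<exists>k. c k \<noteq> 0) \<and>
        (\<forall>z. \<sigma> z = C + (\<Sum>\<^sub>\<infinity>k\<in>(UNIV::int set).
                 c k * (of_int (sgn k) + tanh (of_real (pi / b) * (z - of_int k * of_real a))))))"

definition lin_dep_with_one ::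
  "(complex \<Rightarrow> complex) \<Rightarrow> 'i set \<Rightarrow> ('i \<Rightarrow> real) \<Rightarrow> ('i \<Rightarrow> real) \<Rightarrow> bool" where
  "lin_dep_with_one \<sigma> J \<beta> \<gamma> \<longleftrightarrow>
     (\<exists>(e::complex) (d::'i \<Rightarrow> complex). (e \<noteq> 0 \<or> (\<exists>s\<in>J. d s \<noteq> 0)) \<and>
        (\<forall>t::real. e + (\<Sum>s\<in>J. d s * \<sigma> (of_real (\<beta> s * t + \<gamma> s))) = 0))"

definition affine_symmetry ::
  "(complex \<Rightarrow> complex) \<Rightarrow> real \<Rightarrow> 'i set \<Rightarrow> ('i \<Rightarrow> real) \<Rightarrow> ('i \<Rightarrow> real) \<Rightarrow> ('i \<Rightarrow> real) \<Rightarrow> bool" where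
  "affine_symmetry \<sigma> \<zeta> I \<alpha> \<beta> \<gamma> \<longleftrightarrow>
     finite I \<and> I \<noteq> {} \<and>
     (\<forall>t::real. (\<Sum>s\<in>I. of_real (\<alpha> s) * \<sigma> (of_real (\<beta> s * t + \<gamma> s))) = of_real \<zeta>) \<and>
     \<not> (\<exists>J. J \<subset> I \<and> lin_dep_with_one \<sigma> J \<beta> \<gamma>)"

end

(*
  Let c be the solution on the integers of the recurrence sum_j alpha_j c(m + j) = 0 whose values
  c(0), ..., c(n - 1) are 0, ..., 0, 1.  It grows at most like K^|m|, so for lam = pi / b large the
  series sigma(z) = sum_k c_k (sgn k + tanh(lam (z - k))) converges on the real line.  Shifting t by j
  shifts the index of c by j, so sum_j d_j sigma(t + j) equals
  sum_m g(m) (sgn m + tanh(lam (t - m))) with g(m) = sum_j d_j c(m + j), up to a constant coming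
  from the finitely many m where sgn m and sgn (m + j) differ.  For d = alpha we have g = 0, which
  gives the affine symmetry.  If instead e + sum_{j in J} d_j sigma(t + j) = 0, differencing at
  m0 + 1/2 and m0 - 1/2 shows that g convolved with the bump
  tanh(lam (l + 1/2)) - tanh(lam (l - 1/2)) vanishes; the bump decays like exp(-lam |l|), much faster
  than g can grow, so g = 0.  Up to scaling, alpha is the only relation among the shifts of c, and
  it is not supported on a proper subset J of {0..n}.
*)
theory Submission
  imports Defs
begin

section \<open>Linear recurrences on the integers\<close>

function linrec :: "(nat \<Rightarrow> 'a::field) \<Rightarrow> (nat \<Rightarrow> 'a) \<Rightarrow> nat \<Rightarrow> nat \<Rightarrow> 'a" where
  "linrec a w n i =
     (if i < n then w i else - (\<Sum>j<n. a j * linrec a w n (i - n + j)) / a n)"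
  by auto
termination by (relation "Wellfounded.measure (\<lambda>(a, w, n, i). i)") auto

declare linrec.simps [simp del]

lemma linrec_initial: "i < n \<Longrightarrow> linrec a w n i = w i"
  by (simp add: linrec.simps)

lemma linrec_recurrence:
  assumes "a n \<noteq> 0"
  shows "(\<Sum>j\<le>n. a j * linrec a w n (i + j)) = 0"
proof -
  have "linrec a w n (i + n) = - (\<Sum>j<n. a j * linrec a w n (i + j)) / a n"
    by (simp add: linrec.simps [of a w n "i + n"])
  then show ?thesis
    using assms by (simp add: lessThan_Suc_atMost [symmetric])
qed

lemma norm_linrec_le:
  fixes a w :: "nat \<Rightarrow> 'a::real_normed_field"
  assumes "n \<ge> 1" "a n \<noteq> 0" "K \<ge> 1" "(\<Sum>j<n. norm (a j)) / norm (a n) \<le> K"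
    and "\<And>i. i < n \<Longrightarrow> norm (w i) \<le> 1"
  shows "norm (linrec a w n i) \<le> K ^ i"
proof (induction i rule: less_induct)
  case (less i)
  show ?case
  proof (cases "i < n")
    case True
    then show ?thesis
      using assms by (simp add: linrec_initial order.trans [OF _ one_le_power])
  next
    case False
    have "norm (linrec a w n i) = norm (\<Sum>j<n. a j * linrec a w n (i - n + j)) / norm (a n)"
      using False by (simp add: linrec.simps [of a w n i] norm_divide)
    also have "\<dots> \<le> (\<Sum>j<n. norm (a j) * K ^ (i - 1)) / norm (a n)"
    proof (intro divide_right_mono order.trans [OF norm_sum] sum_mono)
      fix j assume j: "j \<in> {..<n}"
      have "norm (linrec a w n (i - n + j)) \<le> K ^ (i - n + j)"
        using less j False by auto
      also have "\<dots> \<le> K ^ (i - 1)"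
        using j False assms by (intro power_increasing) auto
      finally show "norm (a j * linrec a w n (i - n + j)) \<le> norm (a j) * K ^ (i - 1)"
        by (simp add: norm_mult mult_left_mono)
    qed simp
    also have "\<dots> = (\<Sum>j<n. norm (a j)) / norm (a n) * K ^ (i - 1)"
      by (simp add: sum_distrib_right)
    also have "\<dots> \<le> K * K ^ (i - 1)"
      using assms by (intro mult_right_mono) auto
    also have "\<dots> = K ^ i"
      using False assms by (cases i) auto
    finally show ?thesis .
  qed
qed

text \<open>For negative indices the recurrence is solved backwards: the value at \<open>m\<close> is entry
  \<open>n - 1 - m\<close> of the solution of the reversed recurrence.\<close>
definition two_sided_linrec :: "(nat \<Rightarrow> 'a::field) \<Rightarrow> nat \<Rightarrow> int \<Rightarrow> 'a" where
  "two_sided_linrec a n m =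
     (if 0 \<le> m then linrec a (\<lambda>i. if Suc i = n then 1 else 0) n (nat m)
      else linrec (\<lambda>j. a (n - j)) (\<lambda>i. if i = 0 then 1 else 0) n (nat (int n - 1 - m)))"

lemma two_sided_linrec_window:
  "k < n \<Longrightarrow> two_sided_linrec a n (int k) = (if Suc k = n then 1 else 0)"
  by (simp add: two_sided_linrec_def linrec_initial)

lemma two_sided_linrec_backward:
  assumes "m \<le> int n - 1"
  shows "two_sided_linrec a n m =
           linrec (\<lambda>j. a (n - j)) (\<lambda>i. if i = 0 then 1 else 0) n (nat (int n - 1 - m))"
  using assms by (cases "0 \<le> m") (auto simp: two_sided_linrec_def linrec_initial)

lemma two_sided_linrec_recurrence:
  assumes "a 0 \<noteq> 0" "a n \<noteq> 0"
  shows "(\<Sum>j\<le>n. a j * two_sided_linrec a n (m + int j)) = 0"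
proof (cases "0 \<le> m")
  case True
  then show ?thesis
    using linrec_recurrence [of a, OF assms(2), of _ "nat m"]
    by (simp add: two_sided_linrec_def nat_add_distrib)
next
  case False
  define x where "x = linrec (\<lambda>j. a (n - j)) (\<lambda>i. if i = 0 then 1 else 0) n"
  define i where "i = nat (- m - 1)"
  have "two_sided_linrec a n (m + int j) = x (i + (n - j))" if "j \<le> n" for j
  proof -
    have "nat (int n - 1 - (m + int j)) = i + (n - j)"
      using False that by (simp add: i_def)
    then show ?thesis
      using False that by (simp add: two_sided_linrec_backward x_def)
  qed
  then have "(\<Sum>j\<le>n. a j * two_sided_linrec a n (m + int j)) = (\<Sum>j\<le>n. a j * x (i + (n - j)))"
    by simp
  also have "\<dots> = (\<Sum>j\<le>n. a (n - j) * x (i + j))"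
    by (subst (1 2) atLeast0AtMost [symmetric], subst sum.atLeastAtMost_rev) simp
  also have "\<dots> = 0"
    unfolding x_def by (rule linrec_recurrence) (use assms in simp)
  finally show ?thesis .
qed

lemma norm_two_sided_linrec_le:
  fixes a :: "nat \<Rightarrow> 'a::real_normed_field"
  assumes "n \<ge> 1" "a 0 \<noteq> 0" "a n \<noteq> 0"
  shows "\<exists>K\<ge>1. \<forall>m. norm (two_sided_linrec a n m) \<le> K ^ n * K ^ nat \<bar>m\<bar>"
proof (intro exI conjI allI)
  define K where "K = 1 + (\<Sum>j<n. norm (a j)) / norm (a n) + (\<Sum>j<n. norm (a (n - j))) / norm (a 0)"
  have ratios: "(\<Sum>j<n. norm (a j)) / norm (a n) \<ge> 0" "(\<Sum>j<n. norm (a (n - j))) / norm (a 0) \<ge> 0"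
    by (simp_all add: sum_nonneg)
  then show K: "K \<ge> 1"
    by (simp add: K_def)
  fix m
  show "norm (two_sided_linrec a n m) \<le> K ^ n * K ^ nat \<bar>m\<bar>"
  proof (cases "0 \<le> m")
    case True
    have "norm (two_sided_linrec a n m) \<le> K ^ nat m"
      using True ratios assms
      by (auto simp: two_sided_linrec_def K_def intro!: norm_linrec_le)
    also have "\<dots> \<le> K ^ n * K ^ nat \<bar>m\<bar>"
      using K True by (simp add: power_add [symmetric] power_increasing)
    finally show ?thesis .
  next
    case False
    have "norm (two_sided_linrec a n m) \<le> K ^ nat (int n - 1 - m)"
      using False ratios assms
      by (auto simp: two_sided_linrec_def K_def intro!: norm_linrec_le)
    also have "\<dots> \<le> K ^ n * K ^ nat \<bar>m\<bar>"
      using K False by (simp add: power_add [symmetric] power_increasing)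
    finally show ?thesis .
  qed
qed

lemma shift_relation_lessThan_zero:
  fixes c r :: "_ \<Rightarrow> 'a::comm_ring_1"
  assumes window: "\<And>k. k < n \<Longrightarrow> c (int k) = (if Suc k = n then 1 else 0)"
    and rel: "\<And>m. (\<Sum>j<n. r j * c (m + int j)) = 0"
  shows "i < n \<Longrightarrow> r i = 0"
proof (induction "n - i" arbitrary: i rule: less_induct)
  case less
  have "r j * c (int (n - 1 - i) + int j) = (if j = i then r i else 0)" if "j < n" for j
  proof (cases j i rule: linorder_cases)
    case less
    have "c (int (n - 1 - i + j)) = 0"
      using window [of "n - 1 - i + j"] less \<open>i < n\<close> by auto
    then show ?thesis
      using less by (simp only: of_nat_add) simp
  next
    case equal
    then show ?thesis
      using window [of "n - 1"] \<open>i < n\<close> by simp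
  next
    case greater
    then show ?thesis
      using less.hyps [of j] \<open>j < n\<close> by simp
  qed
  then have "(\<Sum>j<n. r j * c (int (n - 1 - i) + int j)) = r i"
    using \<open>i < n\<close> by simp
  then show ?case
    using rel by simp
qed

lemma shift_relation_proportional:
  fixes a q :: "nat \<Rightarrow> 'a::field"
  assumes "a n \<noteq> 0"
    and window: "\<And>k. k < n \<Longrightarrow> c (int k) = (if Suc k = n then 1 else 0)"
    and rec: "\<And>m. (\<Sum>j\<le>n. a j * c (m + int j)) = 0"
    and rel: "\<And>m. (\<Sum>j\<le>n. q j * c (m + int j)) = 0"
    and "j \<le> n"
  shows "q j = q n / a n * a j"
proof -
  define r where "r j = q j - q n / a n * a j" for j
  have "(\<Sum>j\<le>n. r j * c (m + int j))
          = (\<Sum>j\<le>n. q j * c (m + int j)) - q n / a n * (\<Sum>j\<le>n. a j * c (m + int j))" for m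
    by (simp add: r_def algebra_simps sum_subtractf sum_distrib_left)
  then have "(\<Sum>j<n. r j * c (m + int j)) = 0" for m
    using rec rel \<open>a n \<noteq> 0\<close> by (simp add: r_def lessThan_Suc_atMost [symmetric])
  then have "r j = 0" if "j < n" for j
    using shift_relation_lessThan_zero [OF window] that by blast
  then show ?thesis
    using \<open>j \<le> n\<close> \<open>a n \<noteq> 0\<close> by (cases "j = n") (auto simp: r_def)
qed

lemma shift_relation_proper_subset_zero:
  fixes a d :: "nat \<Rightarrow> 'a::field"
  assumes nonzero: "\<And>k. k \<le> n \<Longrightarrow> a k \<noteq> 0"
    and window: "\<And>k. k < n \<Longrightarrow> c (int k) = (if Suc k = n then 1 else 0)"
    and rec: "\<And>m. (\<Sum>j\<le>n. a j * c (m + int j)) = 0"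
    and "J \<subset> {0..n}"
    and rel: "\<And>m. (\<Sum>j\<in>J. d j * c (m + int j)) = 0"
    and "j \<in> J"
  shows "d j = 0"
proof -
  define q where "q j = (if j \<in> J then d j else 0)" for j
  have "(\<Sum>j\<le>n. q j * c (m + int j)) = (\<Sum>j\<in>J. q j * c (m + int j))" for m
    by (rule sum.mono_neutral_right) (use \<open>J \<subset> {0..n}\<close> in \<open>auto simp: q_def\<close>)
  then have "(\<Sum>j\<le>n. q j * c (m + int j)) = (\<Sum>j\<in>J. d j * c (m + int j))" for m
    by (simp add: q_def)
  then have proportional: "q j = q n / a n * a j" if "j \<le> n" for j
    using shift_relation_proportional [OF nonzero window rec _ that] rel by simp
  obtain j0 where "j0 \<in> {0..n} - J"
    using psubset_imp_ex_mem [OF \<open>J \<subset> {0..n}\<close>] by blast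
  then have "q n / a n = 0"
    using proportional [of j0] nonzero [of j0] by (simp add: q_def)
  then show ?thesis
    using proportional [of j] \<open>J \<subset> {0..n}\<close> \<open>j \<in> J\<close> by (auto simp: q_def)
qed

section \<open>Estimates for tanh\<close>

lemma tanh_of_real: "tanh (of_real x :: 'a::{real_normed_field, banach}) = of_real (tanh x)"
  by (simp add: tanh_altdef exp_of_real flip: of_real_minus exp_of_real)

lemma one_minus_tanh_le: "1 - tanh x \<le> 2 * exp (- 2 * x :: real)"
proof -
  define e where "e = exp (- 2 * x)"
  have "e > 0"
    by (simp add: e_def)
  have "1 - tanh x = 1 - (1 - e) / (1 + e)"
    unfolding tanh_real_altdef e_def ..
  also have "\<dots> = 2 * e / (1 + e)"
    using \<open>e > 0\<close> by (simp add: field_simps)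
  also have "\<dots> \<le> 2 * e"
    using \<open>e > 0\<close> by (simp add: divide_le_eq)
  finally show ?thesis
    by (simp add: e_def)
qed

lemma one_plus_tanh_le: "1 + tanh x \<le> 2 * exp (2 * x :: real)"
  using one_minus_tanh_le [of "- x"] by simp

lemma abs_sgn_plus_tanh_le:
  fixes lam x :: real
  assumes "lam > 0"
  shows "\<bar>of_int (sgn k) + tanh (lam * (x - of_int k))\<bar> \<le> 2 * exp (2 * lam * (\<bar>x\<bar> - \<bar>of_int k\<bar>))"
proof (cases k "0::int" rule: linorder_cases)
  case less
  have "\<bar>of_int (sgn k) + tanh (lam * (x - of_int k))\<bar> = 1 - tanh (lam * (x - of_int k))"
    using less tanh_real_lt_1 [of "lam * (x - of_int k)"] by simp
  also have "\<dots> \<le> 2 * exp (- 2 * (lam * (x - of_int k)))"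
    by (rule one_minus_tanh_le)
  also have "\<dots> = 2 * exp (2 * lam * (- x - \<bar>of_int k\<bar>))"
    using less by (simp add: algebra_simps)
  also have "\<dots> \<le> 2 * exp (2 * lam * (\<bar>x\<bar> - \<bar>of_int k\<bar>))"
    using assms by (simp add: mult_left_mono)
  finally show ?thesis .
next
  case equal
  have "\<bar>tanh (lam * x)\<bar> \<le> 1"
    using tanh_real_bounds [of "lam * x"] by auto
  moreover have "1 \<le> exp (2 * lam * \<bar>x\<bar>)"
    using assms by simp
  ultimately show ?thesis
    using equal by (simp del: one_le_exp_iff)
next
  case greater
  have "\<bar>of_int (sgn k) + tanh (lam * (x - of_int k))\<bar> = 1 + tanh (lam * (x - of_int k))"
    using greater tanh_real_gt_neg1 [of "lam * (x - of_int k)"] by simp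
  also have "\<dots> \<le> 2 * exp (2 * (lam * (x - of_int k)))"
    by (rule one_plus_tanh_le)
  also have "\<dots> \<le> 2 * exp (2 * lam * (\<bar>x\<bar> - \<bar>of_int k\<bar>))"
    using greater assms by (simp add: algebra_simps mult_left_mono)
  finally show ?thesis .
qed

definition tanh_bump :: "real \<Rightarrow> int \<Rightarrow> real" where
  "tanh_bump lam l = tanh (lam * (of_int l + 1/2)) - tanh (lam * (of_int l - 1/2))"

lemma tanh_bump_nonneg: "lam \<ge> 0 \<Longrightarrow> tanh_bump lam l \<ge> 0"
  by (simp add: tanh_bump_def mult_left_mono)

lemma tanh_bump_0_ge_1:
  assumes "exp lam \<ge> 3"
  shows "tanh_bump lam 0 \<ge> 1"
proof -
  have "exp (- lam) = 1 / exp lam"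
    by (simp add: exp_minus inverse_eq_divide)
  also have "\<dots> \<le> 1/3"
    using assms by (intro divide_left_mono) auto
  finally have "exp (- lam) \<le> 1/3" .
  moreover have "tanh_bump lam 0 = 2 * tanh (lam / 2)"
    by (simp add: tanh_bump_def)
  moreover have "tanh (lam / 2) = (1 - exp (- lam)) / (1 + exp (- lam))"
    by (simp add: tanh_real_altdef)
  ultimately show ?thesis
    by (simp add: field_simps add_pos_pos)
qed

lemma tanh_bump_le:
  assumes "lam \<ge> 0" "l \<noteq> 0"
  shows "tanh_bump lam l \<le> 2 / exp lam ^ nat \<bar>l\<bar>"
proof -
  have "2 / exp lam ^ nat \<bar>l\<bar> = 2 * exp (- (lam * \<bar>of_int l\<bar>))"
    by (simp add: exp_minus field_simps flip: exp_of_nat_mult)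
  moreover have "tanh_bump lam l \<le> 2 * exp (- (lam * \<bar>of_int l\<bar>))"
  proof (cases "l > 0")
    case True
    have "tanh_bump lam l \<le> 1 - tanh (lam * (of_int l - 1/2))"
      using tanh_real_lt_1 [of "lam * (of_int l + 1/2)"] by (simp add: tanh_bump_def)
    also have "\<dots> \<le> 2 * exp (- 2 * (lam * (of_int l - 1/2)))"
      by (rule one_minus_tanh_le)
    also have "\<dots> \<le> 2 * exp (- (lam * \<bar>of_int l\<bar>))"
      using True assms mult_left_mono [of 1 "of_int l" lam] by (simp add: algebra_simps)
    finally show ?thesis .
  next
    case False
    have "tanh_bump lam l \<le> 1 + tanh (lam * (of_int l + 1/2))"
      using tanh_real_gt_neg1 [of "lam * (of_int l - 1/2)"] by (simp add: tanh_bump_def)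
    also have "\<dots> \<le> 2 * exp (2 * (lam * (of_int l + 1/2)))"
      by (rule one_plus_tanh_le)
    also have "\<dots> \<le> 2 * exp (- (lam * \<bar>of_int l\<bar>))"
      using False assms mult_left_mono [of "of_int l" "-1" lam] by (simp add: algebra_simps)
    finally show ?thesis .
  qed
  ultimately show ?thesis
    by simp
qed

section \<open>Sums over the integers\<close>

lemma has_sum_sum:
  fixes f :: "'i \<Rightarrow> 'a \<Rightarrow> 'b::topological_comm_monoid_add"
  assumes "finite I" "\<And>i. i \<in> I \<Longrightarrow> (f i has_sum s i) A"
  shows "((\<lambda>x. \<Sum>i\<in>I. f i x) has_sum (\<Sum>i\<in>I. s i)) A"
  using assms by (induction I rule: finite_induct) (auto intro: has_sum_add)

lemma has_sum_diff:
  fixes f g :: "'a \<Rightarrow> 'b::topological_ab_group_add"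
  assumes "(f has_sum a) A" "(g has_sum b) A"
  shows "((\<lambda>x. f x - g x) has_sum (a - b)) A"
proof -
  have "((\<lambda>x. - g x) has_sum - b) A"
    using assms(2) by (simp add: has_sum_uminus)
  from has_sum_add [OF assms(1) this] show ?thesis
    by simp
qed

lemma has_sum_power_abs_int:
  fixes r :: real
  assumes "0 \<le> r" "r < 1"
  shows "((\<lambda>k::int. r ^ nat \<bar>k\<bar>) has_sum ((1 + r) / (1 - r))) UNIV"
proof -
  have geom: "((\<lambda>n. r ^ n) has_sum (1 / (1 - r))) UNIV"
    using assms by (intro sums_nonneg_imp_has_sum geometric_sums) auto
  have nonneg: "((\<lambda>k::int. r ^ nat \<bar>k\<bar>) has_sum (1 / (1 - r))) {0..}"
    by (rule has_sum_reindex_bij_witness [of "{0..}" int nat UNIV "\<lambda>n. r ^ n", THEN iffD2])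
      (use geom in auto)
  have power_neg: "r ^ nat (- k) = r * r ^ nat (- k - 1)" if "k < 0" for k :: int
  proof -
    have "nat (- k) = Suc (nat (- k - 1))"
      using that by simp
    then show ?thesis
      by simp
  qed
  have neg: "((\<lambda>k::int. r ^ nat \<bar>k\<bar>) has_sum (r * (1 / (1 - r)))) {..<0}"
    by (rule has_sum_reindex_bij_witness [of "{..<0}" "\<lambda>n. - int n - 1" "\<lambda>k. nat (- k - 1)"
          UNIV "\<lambda>n. r * r ^ n", THEN iffD2])
      (use has_sum_cmult_right [OF geom] in \<open>auto simp: power_neg\<close>)
  have "((\<lambda>k::int. r ^ nat \<bar>k\<bar>) has_sum (1 / (1 - r) + r * (1 / (1 - r)))) ({0..} \<union> {..<0})"
    by (rule has_sum_Un_disjoint [OF nonneg neg]) auto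
  moreover have "{0..} \<union> {..<0::int} = UNIV" "1 / (1 - r) + r * (1 / (1 - r)) = (1 + r) / (1 - r)"
    using assms by (auto simp: field_simps)
  ultimately show ?thesis
    by simp
qed

lemma has_sum_power_abs_diff_int:
  fixes r :: real
  assumes "0 \<le> r" "r < 1"
  shows "((\<lambda>k::int. r ^ nat \<bar>k - m\<bar>) has_sum (2 * r / (1 - r))) (UNIV - {m})"
proof -
  have "((\<lambda>k::int. r ^ nat \<bar>k - m\<bar>) has_sum ((1 + r) / (1 - r))) UNIV"
    by (rule has_sum_reindex_bij_witness [of UNIV "\<lambda>k. k + m" "\<lambda>k. k - m" UNIV
          "\<lambda>k. r ^ nat \<bar>k\<bar>", THEN iffD2])
      (use has_sum_power_abs_int [OF assms] in auto)
  from has_sum_Diff [OF this, of "{m}" 1] show ?thesis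
    using assms by (simp add: has_sum_finite_iff field_simps)
qed

lemma summable_on_int_geometric_bound:
  fixes f :: "int \<Rightarrow> 'a::banach" and r :: real
  assumes "0 \<le> r" "r < 1" and bound: "\<And>k. norm (f k) \<le> C * r ^ nat \<bar>k\<bar>"
  shows "f summable_on UNIV"
proof (rule abs_summable_summable)
  have "(\<lambda>k::int. C * r ^ nat \<bar>k\<bar>) summable_on UNIV"
    using has_sum_cmult_right [OF has_sum_power_abs_int [OF assms(1,2)]] summable_on_def by blast
  then show "(\<lambda>k. norm (f k)) summable_on UNIV"
    by (rule summable_on_comparison_test) (use bound in auto)
qed

section \<open>The tanh series\<close>

definition tanh_series :: "real \<Rightarrow> (int \<Rightarrow> complex) \<Rightarrow> complex \<Rightarrow> complex" where
  "tanh_series lam c z = (\<Sum>\<^sub>\<infinity>k. c k * (of_int (sgn k) + tanh (of_real lam * (z - of_int k))))"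

lemma Sigma_class_tanh_series:
  assumes "lam > 0" "c k0 \<noteq> 0"
    and growth: "\<And>k. norm (c k) \<le> B * K ^ nat \<bar>k\<bar>" and "0 \<le> K" "K \<le> exp (lam / 2)"
  shows "Sigma_class 1 (pi / lam) (tanh_series lam c)"
proof -
  have "0 \<le> B"
    using order.trans [OF norm_ge_zero growth [of 0]] by simp
  have "norm (c k) * exp (- pi * (1/2) * \<bar>of_int k\<bar> / (pi / lam)) \<le> B" for k
  proof -
    have "exp (- pi * (1/2) * \<bar>of_int k\<bar> / (pi / lam)) = 1 / exp (lam / 2) ^ nat \<bar>k\<bar>"
      by (simp add: exp_minus field_simps flip: exp_of_nat_mult)
    then have "norm (c k) * exp (- pi * (1/2) * \<bar>of_int k\<bar> / (pi / lam))
                 \<le> B * (K / exp (lam / 2)) ^ nat \<bar>k\<bar>"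
      using growth [of k] by (simp add: power_divide divide_right_mono)
    also have "\<dots> \<le> B * 1"
      using \<open>0 \<le> B\<close> assms by (intro mult_left_mono power_le_one) auto
    finally show ?thesis
      by simp
  qed
  then have decay: "\<exists>a'. 0 < a' \<and> a' < 1 \<and>
               (\<exists>M. \<forall>k. norm (c k) * exp (- pi * a' * \<bar>of_int k\<bar> / (pi / lam)) \<le> M)"
    by (intro exI [of _ "1/2"]) auto
  show ?thesis
    unfolding Sigma_class_def tanh_series_def
    using decay assms(2) by (intro exI [of _ "0::complex"] exI [of _ c]) auto
qed

lemma tanh_series_of_real:
  "tanh_series lam c (of_real x) =
     (\<Sum>\<^sub>\<infinity>k. c k * of_real (of_int (sgn k) + tanh (lam * (x - of_int k))))"
  unfolding tanh_series_def by (simp flip: tanh_of_real)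

lemma summable_on_tanh_series_of_real:
  fixes c :: "int \<Rightarrow> complex"
  assumes "lam > 0" "0 \<le> K" "K < exp (2 * lam)"
    and growth: "\<And>k. norm (c k) \<le> B * K ^ nat \<bar>k\<bar>"
  shows "(\<lambda>k. c k * of_real (of_int (sgn k) + tanh (lam * (x - of_int k)))) summable_on UNIV"
proof (rule summable_on_int_geometric_bound)
  show "0 \<le> K / exp (2 * lam)" "K / exp (2 * lam) < 1"
    using assms by auto
  fix k
  have "norm (c k * of_real (of_int (sgn k) + tanh (lam * (x - of_int k))))
          \<le> B * K ^ nat \<bar>k\<bar> * (2 * exp (2 * lam * (\<bar>x\<bar> - \<bar>of_int k\<bar>)))"
    unfolding norm_mult norm_of_real
    by (intro mult_mono growth abs_sgn_plus_tanh_le assms) (use order.trans [OF norm_ge_zero growth [of k]] in auto)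
  also have "\<dots> = 2 * B * exp (2 * lam * \<bar>x\<bar>) * (K / exp (2 * lam)) ^ nat \<bar>k\<bar>"
    by (simp add: exp_diff field_simps flip: exp_of_nat_mult)
  finally show "norm (c k * of_real (of_int (sgn k) + tanh (lam * (x - of_int k))))
                  \<le> 2 * B * exp (2 * lam * \<bar>x\<bar>) * (K / exp (2 * lam)) ^ nat \<bar>k\<bar>" .
qed

lemma has_sum_shifted_combination:
  fixes c :: "int \<Rightarrow> complex" and d :: "nat \<Rightarrow> complex" and h :: "real \<Rightarrow> real"
  defines "F x \<equiv> (\<Sum>\<^sub>\<infinity>k. c k * of_real (of_int (sgn k) + h (x - of_int k)))"
  assumes summable: "\<And>x. (\<lambda>k. c k * of_real (of_int (sgn k) + h (x - of_int k))) summable_on UNIV"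
    and "finite J" "J \<subseteq> {..n}"
  shows "((\<lambda>m. (\<Sum>j\<in>J. d j * c (m + int j)) * of_real (of_int (sgn m) + h (t - of_int m)))
           has_sum ((\<Sum>j\<in>J. d j * F (t + real j))
                    - (\<Sum>m\<in>{-int n..0}. \<Sum>j\<in>J. d j * c (m + int j) * of_int (sgn (m + int j) - sgn m))))
           UNIV"
proof -
  have shifted: "((\<lambda>m. c (m + int j) * of_real (of_int (sgn (m + int j)) + h (t - of_int m)))
                   has_sum F (t + real j)) UNIV" for j
    by (rule has_sum_reindex_bij_witness [of UNIV "\<lambda>k. k - int j" "\<lambda>m. m + int j" UNIV
          "\<lambda>k. c k * of_real (of_int (sgn k) + h (t + real j - of_int k))", THEN iffD2])
      (use summable [of "t + real j"] in \<open>auto simp: F_def summable_iff_has_sum_infsum\<close>)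
  define u where
    "u m = (\<Sum>j\<in>J. d j * c (m + int j) * of_int (sgn (m + int j) - sgn m))" for m
  have "u m = 0" if "m \<notin> {-int n..0}" for m
  proof -
    have "sgn (m + int j) = sgn m" if "j \<in> J" for j
      using \<open>m \<notin> {-int n..0}\<close> \<open>J \<subseteq> {..n}\<close> that by (auto simp: sgn_if)
    then show ?thesis
      by (simp add: u_def)
  qed
  then have "(u has_sum (\<Sum>m\<in>{-int n..0}. u m)) UNIV"
    by (intro has_sum_finite_neutralI) auto
  moreover have "((\<lambda>m. \<Sum>j\<in>J. d j * (c (m + int j) * of_real (of_int (sgn (m + int j)) + h (t - of_int m))))
                   has_sum (\<Sum>j\<in>J. d j * F (t + real j))) UNIV"
    by (intro has_sum_sum [OF \<open>finite J\<close>] has_sum_cmult_right shifted)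
  ultimately have "((\<lambda>m. (\<Sum>j\<in>J. d j * (c (m + int j) * of_real (of_int (sgn (m + int j)) + h (t - of_int m))))
                      - u m)
                   has_sum ((\<Sum>j\<in>J. d j * F (t + real j)) - (\<Sum>m\<in>{-int n..0}. u m))) UNIV"
    by (intro has_sum_diff)
  moreover have "(\<Sum>j\<in>J. d j * (c (m + int j) * of_real (of_int (sgn (m + int j)) + h (t - of_int m))))
                   - u m
                 = (\<Sum>j\<in>J. d j * c (m + int j)) * of_real (of_int (sgn m) + h (t - of_int m))" for m
    unfolding u_def sum_subtractf [symmetric] sum_distrib_right
    by (intro sum.cong refl) (simp add: algebra_simps)
  ultimately show ?thesis
    by (simp add: u_def)
qed

lemma has_sum_tanh_series_shift_combination:
  fixes c :: "int \<Rightarrow> complex" and d :: "nat \<Rightarrow> complex"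
  assumes "lam > 0" "0 \<le> K" "K \<le> exp lam"
    and growth: "\<And>k. norm (c k) \<le> B * K ^ nat \<bar>k\<bar>"
    and "finite J" "J \<subseteq> {..n}"
  shows "((\<lambda>m. (\<Sum>j\<in>J. d j * c (m + int j)) * of_real (of_int (sgn m) + tanh (lam * (t - of_int m))))
           has_sum ((\<Sum>j\<in>J. d j * tanh_series lam c (of_real (t + real j)))
                    - (\<Sum>m\<in>{-int n..0}. \<Sum>j\<in>J. d j * c (m + int j) * of_int (sgn (m + int j) - sgn m))))
           UNIV"
proof -
  have "K < exp (2 * lam)"
    using assms(1,3) by (smt (verit) exp_less_cancel_iff)
  then have "(\<lambda>k. c k * of_real (of_int (sgn k) + tanh (lam * (x - of_int k)))) summable_on UNIV" for x
    using summable_on_tanh_series_of_real [OF \<open>lam > 0\<close> \<open>0 \<le> K\<close> _ growth] by blast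
  from has_sum_shifted_combination [of c "\<lambda>y. tanh (lam * y)", OF this \<open>finite J\<close> \<open>J \<subseteq> {..n}\<close>]
  show ?thesis
    unfolding tanh_series_of_real by simp
qed

lemma tanh_series_annihilating_combination:
  fixes c :: "int \<Rightarrow> complex" and d :: "nat \<Rightarrow> complex"
  assumes "lam > 0" "0 \<le> K" "K \<le> exp lam"
    and growth: "\<And>k. norm (c k) \<le> B * K ^ nat \<bar>k\<bar>"
    and "finite J" "J \<subseteq> {..n}"
    and annihilating: "\<And>m. (\<Sum>j\<in>J. d j * c (m + int j)) = 0"
  shows "(\<Sum>j\<in>J. d j * tanh_series lam c (of_real (t + real j)))
           = (\<Sum>m\<in>{-int n..0}. \<Sum>j\<in>J. d j * c (m + int j) * of_int (sgn (m + int j) - sgn m))"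
proof -
  have "((\<lambda>_::int. 0) has_sum ((\<Sum>j\<in>J. d j * tanh_series lam c (of_real (t + real j)))
          - (\<Sum>m\<in>{-int n..0}. \<Sum>j\<in>J. d j * c (m + int j) * of_int (sgn (m + int j) - sgn m)))) UNIV"
    using has_sum_tanh_series_shift_combination [OF assms(1-6), of d t] by (simp add: annihilating)
  from has_sum_unique [OF this has_sum_0_simp] show ?thesis
    by simp
qed

section \<open>Rigidity\<close>

lemma int_decaying_has_max:
  fixes f :: "int \<Rightarrow> real"
  assumes "0 \<le> r" "r < 1" and decay: "\<And>m. f m \<le> G * r ^ nat \<bar>m\<bar>" and "f m1 > 0"
  shows "\<exists>ms. \<forall>m. f m \<le> f ms"
proof -
  have "0 < G * r ^ nat \<bar>m1\<bar>"
    using decay [of m1] \<open>f m1 > 0\<close> by linarith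
  then have "G > 0"
    using \<open>0 \<le> r\<close> by (simp add: zero_less_mult_iff)
  obtain N where "r ^ N < f m1 / G"
    using real_arch_pow_inv [of "f m1 / G" r] \<open>G > 0\<close> \<open>f m1 > 0\<close> \<open>r < 1\<close> by auto
  then have N: "G * r ^ N < f m1"
    using \<open>G > 0\<close> by (simp add: field_simps)
  have small: "f m < f m1" if "m \<notin> {-int N..int N}" for m
  proof -
    have "f m \<le> G * r ^ nat \<bar>m\<bar>"
      by (rule decay)
    also have "\<dots> \<le> G * r ^ N"
      using that \<open>G > 0\<close> assms by (intro mult_left_mono power_decreasing) auto
    finally show ?thesis
      using N by linarith
  qed
  have "Max (f ` {-int N..int N}) \<in> f ` {-int N..int N}"
    by (intro Max_in) auto
  then obtain ms where ms: "f ms = Max (f ` {-int N..int N})"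
    by (metis imageE)
  have "f m \<le> f ms" if "m \<in> {-int N..int N}" for m
    using that by (simp add: ms)
  moreover have "f m1 \<le> f ms"
    using calculation small [of m1] by fastforce
  ultimately have "f m \<le> f ms" for m
    using small [of m] by fastforce
  then show ?thesis
    by blast
qed

lemma exists_dominant_index:
  fixes g :: "int \<Rightarrow> 'a::real_normed_vector"
  assumes "K \<ge> 1" and growth: "\<And>m. norm (g m) \<le> G * K ^ nat \<bar>m\<bar>" and "g m \<noteq> 0"
  shows "\<exists>ms. g ms \<noteq> 0 \<and> (\<forall>k. norm (g k) \<le> norm (g ms) * (2 * K) ^ nat \<bar>k - ms\<bar>)"
proof -
  define f where "f k = norm (g k) / (2 * K) ^ nat \<bar>k\<bar>" for k
  have "f k \<le> G * (1/2) ^ nat \<bar>k\<bar>" for k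
  proof -
    have "f k \<le> G * K ^ nat \<bar>k\<bar> / (2 * K) ^ nat \<bar>k\<bar>"
      unfolding f_def using growth [of k] \<open>K \<ge> 1\<close> by (intro divide_right_mono) auto
    also have "\<dots> = G * (1/2) ^ nat \<bar>k\<bar>"
      using \<open>K \<ge> 1\<close> by (simp add: power_mult_distrib power_divide)
    finally show ?thesis .
  qed
  moreover have "f m > 0"
    using \<open>g m \<noteq> 0\<close> \<open>K \<ge> 1\<close> by (simp add: f_def)
  ultimately obtain ms where max: "\<And>k. f k \<le> f ms"
    using int_decaying_has_max [of "1/2" f] by force
  have "g ms \<noteq> 0"
    using max [of m] \<open>f m > 0\<close> by (auto simp: f_def)
  moreover have "norm (g k) \<le> norm (g ms) * (2 * K) ^ nat \<bar>k - ms\<bar>" for k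
  proof -
    have "norm (g k) \<le> f ms * (2 * K) ^ nat \<bar>k\<bar>"
      using max [of k] \<open>K \<ge> 1\<close> by (simp add: f_def divide_le_eq)
    also have "\<dots> \<le> f ms * (2 * K) ^ (nat \<bar>k - ms\<bar> + nat \<bar>ms\<bar>)"
      using \<open>K \<ge> 1\<close> by (intro mult_left_mono power_increasing) (auto simp: f_def)
    also have "\<dots> = norm (g ms) * (2 * K) ^ nat \<bar>k - ms\<bar>"
      using \<open>K \<ge> 1\<close> by (simp add: f_def power_add)
    finally show ?thesis .
  qed
  ultimately show ?thesis
    by blast
qed

lemma norm_tanh_bump_tail_le:
  fixes g :: "int \<Rightarrow> complex"
  assumes "lam > 0" "0 \<le> L" "L < exp lam"
    and dominant: "\<And>k. norm (g k) \<le> norm (g ms) * L ^ nat \<bar>k - ms\<bar>"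
    and tail: "((\<lambda>k. g k * of_real (tanh_bump lam (k - ms))) has_sum S) (UNIV - {ms})"
  shows "norm S \<le> norm (g ms) * (2 * (2 * (L / exp lam) / (1 - L / exp lam)))"
proof -
  define \<rho> where "\<rho> = L / exp lam"
  have "0 \<le> \<rho>" "\<rho> < 1"
    using assms(2,3) by (simp_all add: \<rho>_def)
  have "((\<lambda>k. 2 * norm (g ms) * \<rho> ^ nat \<bar>k - ms\<bar>) has_sum (2 * norm (g ms) * (2 * \<rho> / (1 - \<rho>))))
          (UNIV - {ms})"
    using \<open>0 \<le> \<rho>\<close> \<open>\<rho> < 1\<close> by (intro has_sum_cmult_right has_sum_power_abs_diff_int)
  moreover have "norm (g k * of_real (tanh_bump lam (k - ms))) \<le> 2 * norm (g ms) * \<rho> ^ nat \<bar>k - ms\<bar>"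
    if "k \<in> UNIV - {ms}" for k
  proof -
    have "norm (g k * of_real (tanh_bump lam (k - ms)))
            \<le> norm (g ms) * L ^ nat \<bar>k - ms\<bar> * (2 / exp lam ^ nat \<bar>k - ms\<bar>)"
      unfolding norm_mult norm_of_real
      using dominant [of k] tanh_bump_le [of lam "k - ms"] tanh_bump_nonneg [of lam "k - ms"] that
        \<open>lam > 0\<close> \<open>0 \<le> L\<close>
      by (intro mult_mono) auto
    also have "\<dots> = 2 * norm (g ms) * \<rho> ^ nat \<bar>k - ms\<bar>"
      by (simp add: \<rho>_def power_divide)
    finally show ?thesis .
  qed
  ultimately have "norm S \<le> 2 * norm (g ms) * (2 * \<rho> / (1 - \<rho>))"
    by (rule norm_infsum_le [OF tail])
  then show ?thesis
    by (simp add: \<rho>_def mult_ac)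
qed

text \<open>Against the growth bound \<open>K ^ \<bar>m\<bar>\<close> the kernel decays like \<open>exp (- lam \<bar>m\<bar>)\<close>, so at a
  dominant index the central term of the convolution outweighs all the others together.\<close>
lemma tanh_bump_convolution_eq_0_imp_zero:
  fixes g :: "int \<Rightarrow> complex"
  assumes "K \<ge> 1" "lam > 0" "16 * K^2 \<le> exp lam"
    and growth: "\<And>m. norm (g m) \<le> G * K ^ nat \<bar>m\<bar>"
    and conv: "\<And>m0. ((\<lambda>m. g m * of_real (tanh_bump lam (m - m0))) has_sum 0) UNIV"
  shows "g m = 0"
proof (rule ccontr)
  assume "g m \<noteq> 0"
  then obtain ms where "g ms \<noteq> 0" and dominant: "\<And>k. norm (g k) \<le> norm (g ms) * (2 * K) ^ nat \<bar>k - ms\<bar>"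
    using exists_dominant_index [OF \<open>K \<ge> 1\<close> growth] by blast
  define \<rho> where "\<rho> = 2 * K / exp lam"
  have "\<rho> \<le> 1/8"
    using \<open>K \<ge> 1\<close> \<open>16 * K^2 \<le> exp lam\<close> self_le_power [of K 2] by (simp add: \<rho>_def divide_le_eq)
  have "((\<lambda>k. g k * of_real (tanh_bump lam (k - ms))) has_sum (- (g ms * of_real (tanh_bump lam 0))))
          (UNIV - {ms})"
    using has_sum_Diff [OF conv [of ms], of "{ms}"] by (simp add: has_sum_finite_iff)
  from norm_tanh_bump_tail_le [OF \<open>lam > 0\<close> _ _ dominant this] \<open>K \<ge> 1\<close> \<open>\<rho> \<le> 1/8\<close>
  have central: "norm (g ms) * tanh_bump lam 0 \<le> norm (g ms) * (2 * (2 * \<rho> / (1 - \<rho>)))"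
    using tanh_bump_nonneg [of lam 0] \<open>lam > 0\<close> by (simp add: \<rho>_def norm_mult)
  have "tanh_bump lam 0 \<ge> 1"
    using \<open>K \<ge> 1\<close> \<open>16 * K^2 \<le> exp lam\<close> one_le_power [of K 2] by (intro tanh_bump_0_ge_1) linarith
  then have "norm (g ms) * 1 \<le> norm (g ms) * tanh_bump lam 0"
    by (intro mult_left_mono) auto
  also note central
  also have "norm (g ms) * (2 * (2 * \<rho> / (1 - \<rho>))) < norm (g ms) * 1"
    using \<open>g ms \<noteq> 0\<close> \<open>\<rho> \<le> 1/8\<close> by (intro mult_strict_left_mono) (auto simp: field_simps)
  finally show False
    by simp
qed

lemma tanh_bump_eq_diff:
  "tanh_bump lam (m - m0) =
     (of_int (sgn m) + tanh (lam * (m0 + 1/2 - of_int m)))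
     - (of_int (sgn m) + tanh (lam * (m0 - 1/2 - of_int m)))"
proof -
  have "tanh (lam * (m0 + 1/2 - of_int m)) = - tanh (lam * (of_int (m - m0) - 1/2))"
       "tanh (lam * (m0 - 1/2 - of_int m)) = - tanh (lam * (of_int (m - m0) + 1/2))"
    by (subst tanh_minus [symmetric], simp add: algebra_simps)+
  then show ?thesis
    unfolding tanh_bump_def by simp
qed

lemma norm_shift_combination_le:
  fixes c :: "int \<Rightarrow> 'a::real_normed_algebra"
  assumes "K \<ge> 1" and growth: "\<And>m. norm (c m) \<le> B * K ^ nat \<bar>m\<bar>" and "J \<subseteq> {..n}"
  shows "norm (\<Sum>j\<in>J. d j * c (m + int j)) \<le> ((\<Sum>j\<in>J. norm (d j)) * B * K ^ n) * K ^ nat \<bar>m\<bar>"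
proof -
  have "norm (c (m + int j)) \<le> B * K ^ n * K ^ nat \<bar>m\<bar>" if "j \<in> J" for j
  proof -
    have "K ^ nat \<bar>m + int j\<bar> \<le> K ^ (n + nat \<bar>m\<bar>)"
      using \<open>K \<ge> 1\<close> \<open>J \<subseteq> {..n}\<close> that by (intro power_increasing) auto
    then have "B * K ^ nat \<bar>m + int j\<bar> \<le> B * K ^ (n + nat \<bar>m\<bar>)"
      using order.trans [OF norm_ge_zero growth [of 0]] by (intro mult_left_mono) auto
    then show ?thesis
      using growth [of "m + int j"] by (simp add: power_add mult_ac)
  qed
  then have "norm (\<Sum>j\<in>J. d j * c (m + int j)) \<le> (\<Sum>j\<in>J. norm (d j) * (B * K ^ n * K ^ nat \<bar>m\<bar>))"
    by (intro order.trans [OF norm_sum] sum_mono order.trans [OF norm_mult_ineq] mult_left_mono) auto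
  then show ?thesis
    by (simp add: sum_distrib_left mult_ac)
qed

lemma tanh_series_shift_relation_imp_zero:
  fixes c :: "int \<Rightarrow> complex" and d :: "nat \<Rightarrow> complex"
  assumes "K \<ge> 1" "lam > 0" "16 * K^2 \<le> exp lam"
    and growth: "\<And>m. norm (c m) \<le> B * K ^ nat \<bar>m\<bar>"
    and "finite J" "J \<subseteq> {..n}"
    and rel: "\<And>t. e + (\<Sum>j\<in>J. d j * tanh_series lam c (of_real (t + real j))) = 0"
  shows "(\<Sum>j\<in>J. d j * c (m + int j)) = 0"
proof -
  define g where "g m = (\<Sum>j\<in>J. d j * c (m + int j))" for m
  define U where "U = (\<Sum>m\<in>{-int n..0}. \<Sum>j\<in>J. d j * c (m + int j) * of_int (sgn (m + int j) - sgn m))"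
  have "K \<le> exp lam"
    using \<open>K \<ge> 1\<close> \<open>16 * K^2 \<le> exp lam\<close> self_le_power [of K 2] by simp
  have series: "((\<lambda>m. g m * of_real (of_int (sgn m) + tanh (lam * (t - of_int m)))) has_sum (- e - U)) UNIV"
    for t
  proof -
    have "(\<Sum>j\<in>J. d j * tanh_series lam c (of_real (t + real j))) = - e"
      using rel [of t] by (simp add: eq_neg_iff_add_eq_0 add.commute)
    then show ?thesis
      using has_sum_tanh_series_shift_combination [OF \<open>lam > 0\<close> _ \<open>K \<le> exp lam\<close> growth
          \<open>finite J\<close> \<open>J \<subseteq> {..n}\<close>, of d t] \<open>K \<ge> 1\<close>
      by (simp add: g_def U_def)
  qed
  have "((\<lambda>m. g m * of_real (tanh_bump lam (m - m0))) has_sum 0) UNIV" for m0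
    using has_sum_diff [OF series [of "m0 + 1/2"] series [of "m0 - 1/2"]]
    by (simp add: tanh_bump_eq_diff algebra_simps)
  then have "g m = 0"
    using tanh_bump_convolution_eq_0_imp_zero [OF assms(1-3) norm_shift_combination_le [OF \<open>K \<ge> 1\<close> growth
        \<open>J \<subseteq> {..n}\<close>]]
    by (simp add: g_def)
  then show ?thesis
    by (simp add: g_def)
qed

lemma not_lin_dep_with_one_tanh_series:
  fixes \<alpha> :: "nat \<Rightarrow> real" and c :: "int \<Rightarrow> complex"
  assumes nonzero: "\<And>k. k \<le> n \<Longrightarrow> \<alpha> k \<noteq> 0"
    and window: "\<And>k. k < n \<Longrightarrow> c (int k) = (if Suc k = n then 1 else 0)"
    and rec: "\<And>m. (\<Sum>j\<le>n. of_real (\<alpha> j) * c (m + int j)) = 0"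
    and growth: "\<And>m. norm (c m) \<le> B * K ^ nat \<bar>m\<bar>"
    and "K \<ge> 1" "lam > 0" "16 * K^2 \<le> exp lam"
    and "J \<subset> {0..n}"
  shows "\<not> lin_dep_with_one (tanh_series lam c) J (\<lambda>_. 1) (\<lambda>k. real k)"
proof
  assume "lin_dep_with_one (tanh_series lam c) J (\<lambda>_. 1) (\<lambda>k. real k)"
  then obtain e d where nontrivial: "e \<noteq> 0 \<or> (\<exists>s\<in>J. d s \<noteq> 0)"
    and rel: "\<And>t. e + (\<Sum>s\<in>J. d s * tanh_series lam c (of_real (1 * t + real s))) = 0"
    unfolding lin_dep_with_one_def by blast
  have "finite J" "J \<subseteq> {..n}"
    using \<open>J \<subset> {0..n}\<close> finite_subset by auto
  have "(\<Sum>j\<in>J. d j * c (m + int j)) = 0" for m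
    by (rule tanh_series_shift_relation_imp_zero [OF \<open>K \<ge> 1\<close> \<open>lam > 0\<close> \<open>16 * K^2 \<le> exp lam\<close> growth
          \<open>finite J\<close> \<open>J \<subseteq> {..n}\<close>]) (use rel in simp)
  then have "d j = 0" if "j \<in> J" for j
    using shift_relation_proper_subset_zero [OF _ window rec \<open>J \<subset> {0..n}\<close> _ that] nonzero by simp
  moreover have "e = 0"
    using rel [of 0] calculation by simp
  ultimately show False
    using nontrivial by auto
qed

lemma affine_symmetry_tanh_series:
  fixes \<alpha> :: "nat \<Rightarrow> real" and c :: "int \<Rightarrow> real"
  assumes nonzero: "\<And>k. k \<le> n \<Longrightarrow> \<alpha> k \<noteq> 0"
    and window: "\<And>k. k < n \<Longrightarrow> c (int k) = (if Suc k = n then 1 else 0)"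
    and rec: "\<And>m. (\<Sum>j\<le>n. \<alpha> j * c (m + int j)) = 0"
    and growth: "\<And>m. \<bar>c m\<bar> \<le> B * K ^ nat \<bar>m\<bar>"
    and "K \<ge> 1" "lam > 0" "16 * K^2 \<le> exp lam"
  shows "\<exists>\<zeta>. affine_symmetry (tanh_series lam (\<lambda>k. of_real (c k))) \<zeta> {0..n} \<alpha> (\<lambda>_. 1) (\<lambda>k. real k)"
proof -
  define \<zeta> where "\<zeta> = (\<Sum>m\<in>{-int n..0}. \<Sum>j\<in>{0..n}. \<alpha> j * c (m + int j) * of_int (sgn (m + int j) - sgn m))"
  have window': "\<And>k. k < n \<Longrightarrow> complex_of_real (c (int k)) = (if Suc k = n then 1 else 0)"
    using window by simp
  have rec': "(\<Sum>j\<le>n. of_real (\<alpha> j) * of_real (c (m + int j))) = (0::complex)" for m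
    using rec [of m] by (simp flip: of_real_mult of_real_sum)
  have growth': "\<And>m. norm (complex_of_real (c m)) \<le> B * K ^ nat \<bar>m\<bar>"
    using growth by simp
  have "K \<le> exp lam"
    using \<open>K \<ge> 1\<close> \<open>16 * K^2 \<le> exp lam\<close> self_le_power [of K 2] by simp
  have "(\<Sum>j\<in>{0..n}. of_real (\<alpha> j) * tanh_series lam (\<lambda>k. of_real (c k)) (of_real (t + real j)))
          = (\<Sum>m\<in>{-int n..0}. \<Sum>j\<in>{0..n}.
               of_real (\<alpha> j) * of_real (c (m + int j)) * of_int (sgn (m + int j) - sgn m))" for t
    by (rule tanh_series_annihilating_combination [OF \<open>lam > 0\<close> _ \<open>K \<le> exp lam\<close> growth'])
      (use \<open>K \<ge> 1\<close> rec' in \<open>auto simp: atLeast0AtMost\<close>)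
  then have "(\<Sum>s\<in>{0..n}. of_real (\<alpha> s) * tanh_series lam (\<lambda>k. of_real (c k)) (of_real (1 * t + real s)))
               = of_real \<zeta>" for t
    by (simp add: \<zeta>_def)
  moreover have "\<not> lin_dep_with_one (tanh_series lam (\<lambda>k. of_real (c k))) J (\<lambda>_. 1) (\<lambda>k. real k)"
    if "J \<subset> {0..n}" for J
    by (rule not_lin_dep_with_one_tanh_series [OF nonzero window' rec' growth' assms(5-7) that])
  ultimately show ?thesis
    unfolding affine_symmetry_def by auto
qed

theorem proposition3:
  fixes \<alpha> :: "nat \<Rightarrow> real" and n :: nat
  assumes "n \<ge> 1"
    and "\<forall>k\<le>n. \<alpha> k \<noteq> 0"
  shows "\<exists>b>0. \<exists>\<zeta>::real. \<exists>\<sigma>. Sigma_class 1 b \<sigma> \<and>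
           affine_symmetry \<sigma> \<zeta> {0..n} \<alpha> (\<lambda>_. 1) (\<lambda>k. real k)"
proof -
  define c where "c = two_sided_linrec \<alpha> n"
  have nonzero: "\<And>k. k \<le> n \<Longrightarrow> \<alpha> k \<noteq> 0"
    using assms(2) by blast
  obtain K where "K \<ge> 1" and growth: "\<And>m. \<bar>c m\<bar> \<le> K ^ n * K ^ nat \<bar>m\<bar>"
    using norm_two_sided_linrec_le [OF \<open>n \<ge> 1\<close>, of \<alpha>] nonzero by (auto simp: c_def)
  define lam where "lam = 2 * ln (4 * K)"
  have "lam > 0" "exp (lam / 2) = 4 * K" "exp lam = 16 * K^2"
    using \<open>K \<ge> 1\<close> by (simp_all add: lam_def exp_double)
  have window: "\<And>k. k < n \<Longrightarrow> c (int k) = (if Suc k = n then 1 else 0)"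
    by (simp add: c_def two_sided_linrec_window)
  have rec: "\<And>m. (\<Sum>j\<le>n. \<alpha> j * c (m + int j)) = 0"
    unfolding c_def by (rule two_sided_linrec_recurrence) (use nonzero in auto)
  have "c (int (n - 1)) = 1"
    using window [of "n - 1"] \<open>n \<ge> 1\<close> by simp
  then have "Sigma_class 1 (pi / lam) (tanh_series lam (\<lambda>k. of_real (c k)))"
    using \<open>K \<ge> 1\<close> growth \<open>lam > 0\<close> \<open>exp (lam / 2) = 4 * K\<close>
    by (intro Sigma_class_tanh_series [of lam _ "int (n - 1)" "K ^ n" K]) auto
  moreover obtain \<zeta> where "affine_symmetry (tanh_series lam (\<lambda>k. of_real (c k))) \<zeta> {0..n} \<alpha> (\<lambda>_. 1) (\<lambda>k. real k)"
    using affine_symmetry_tanh_series [OF nonzero window rec growth \<open>K \<ge> 1\<close> \<open>lam > 0\<close>]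
      \<open>exp lam = 16 * K^2\<close> by auto
  ultimately show ?thesis
    using \<open>lam > 0\<close> by (intro exI [of _ "pi / lam"]) auto
qed

end
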